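(* Let $G$ be a maximal subgroup of a completely simple semigroup $S$. Let $\sigma : X^+ \to G$ be a semigroup choice of generators for $G$ and $\tau : Y^+ \to S$ a semigroup choice of generators for $S$ such that $X \subseteq Y$ and $\sigma$ is the restriction of $\tau$ to $X^+$. Then $L_\sigma(G) = L_\tau(S) \cap \hat{X}^*$.
   Context: Maps are written on the right. $X^*$, $X^+$ are the free monoid and free semigroup on $X$. A semigroup is completely simple if it has no proper ideals and has a primitive idempotent (an idempotent $e$ with: every idempotent $f$ such that $ef = fe = f$ equals $e$). A maximal subgroup is a subsemigroup which is a group under the inherited multiplication and is contained in no larger such. For a monoid $M$ and surjective morphism $\sigma : X^* \to M$, let $\overline{X} = \{\overline{x} : x \in X\}$ be new symbols ($\overline{Y}$ similarly, with $\overline{X} \subseteq \overline{Y}$ when $X \subseteq Y$), $\hat{X} = X \cup \overline{X}$; the loop automaton has vertex set $M$, for each $a \in M$, $x \in X$ an edge $a \to a(x\sigma)$ labelled $x$ and an edge $a(x\sigma) \to a$ labelled $\overline{x}$; the loop problem $L_\sigma(M) \subseteq \hat{X}^*$ is the set of labels of paths from the identity to the identity. For a semigroup $T$ with surjective morphism $\sigma : X^+ \to T$, $T^1$ denotes $T$ with a new identity adjoined (even if $T$ already has one), $\sigma^1 : X^* \to T^1$ the extension, and $L_\sigma(T) := L_{\sigma^1}(T^1)$ (this applies to both $G$ and $S$ here). *)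

theory Defs
  imports Main
begin

definition semigroup_on :: "'a set \<Rightarrow> ('a \<Rightarrow> 'a \<Rightarrow> 'a) \<Rightarrow> bool" where
  "semigroup_on S m \<longleftrightarrow> (\<forall>a\<in>S. \<forall>b\<in>S. m a b \<in> S) \<and>
     (\<forall>a\<in>S. \<forall>b\<in>S. \<forall>c\<in>S. m (m a b) c = m a (m b c))"

definition is_ideal :: "'a set \<Rightarrow> ('a \<Rightarrow> 'a \<Rightarrow> 'a) \<Rightarrow> 'a set \<Rightarrow> bool" where
  "is_ideal S m I \<longleftrightarrow> I \<noteq> {} \<and> I \<subseteq> S \<and> (\<forall>s\<in>S. \<forall>i\<in>I. m s i \<in> I \<and> m i s \<in> I)"

definition primitive_idempotent :: "'a set \<Rightarrow> ('a \<Rightarrow> 'a \<Rightarrow> 'a) \<Rightarrow> 'a \<Rightarrow> bool" where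
  "primitive_idempotent S m e \<longleftrightarrow> e \<in> S \<and> m e e = e \<and>
     (\<forall>f\<in>S. m f f = f \<and> m e f = f \<and> m f e = f \<longrightarrow> f = e)"

definition completely_simple :: "'a set \<Rightarrow> ('a \<Rightarrow> 'a \<Rightarrow> 'a) \<Rightarrow> bool" where
  "completely_simple S m \<longleftrightarrow> semigroup_on S m \<and>
     (\<forall>I. is_ideal S m I \<longrightarrow> I = S) \<and> (\<exists>e. primitive_idempotent S m e)"

definition subgroup_in :: "'a set \<Rightarrow> ('a \<Rightarrow> 'a \<Rightarrow> 'a) \<Rightarrow> 'a set \<Rightarrow> bool" where
  "subgroup_in S m H \<longleftrightarrow> H \<subseteq> S \<and> (\<forall>a\<in>H. \<forall>b\<in>H. m a b \<in> H) \<and>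
     (\<exists>e\<in>H. (\<forall>a\<in>H. m e a = a \<and> m a e = a) \<and> (\<forall>a\<in>H. \<exists>b\<in>H. m a b = e \<and> m b a = e))"

definition maximal_subgroup :: "'a set \<Rightarrow> ('a \<Rightarrow> 'a \<Rightarrow> 'a) \<Rightarrow> 'a set \<Rightarrow> bool" where
  "maximal_subgroup S m G \<longleftrightarrow> subgroup_in S m G \<and>
     (\<forall>H. subgroup_in S m H \<and> G \<subseteq> H \<longrightarrow> H = G)"

fun word_eval :: "('a \<Rightarrow> 'a \<Rightarrow> 'a) \<Rightarrow> ('x \<Rightarrow> 'a) \<Rightarrow> 'x list \<Rightarrow> 'a" where
  "word_eval m f [x] = f x"
| "word_eval m f (x # y # ws) = m (f x) (word_eval m f (y # ws))"
| "word_eval m f [] = undefined"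

definition semigroup_generators :: "'a set \<Rightarrow> ('a \<Rightarrow> 'a \<Rightarrow> 'a) \<Rightarrow> 'x set \<Rightarrow> ('x \<Rightarrow> 'a) \<Rightarrow> bool" where
  "semigroup_generators T m X f \<longleftrightarrow> (\<forall>x\<in>X. f x \<in> T) \<and>
     {word_eval m f w | w. w \<noteq> [] \<and> set w \<subseteq> X} = T"

datatype 'x hat = Pos 'x | Bar 'x

definition hat_set :: "'x set \<Rightarrow> 'x hat set" where
  "hat_set X = Pos ` X \<union> Bar ` X"

text \<open>T^1: T with a new identity adjoined, modelled as None.\<close>
definition adj1 :: "'a set \<Rightarrow> 'a option set" where
  "adj1 T = insert None (Some ` T)"

fun mult1 :: "('a \<Rightarrow> 'a \<Rightarrow> 'a) \<Rightarrow> 'a option \<Rightarrow> 'a option \<Rightarrow> 'a option" where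
  "mult1 m None b = b"
| "mult1 m a None = a"
| "mult1 m (Some a) (Some b) = Some (m a b)"

definition loop_edge :: "'a set \<Rightarrow> ('a \<Rightarrow> 'a \<Rightarrow> 'a) \<Rightarrow> 'x set \<Rightarrow> ('x \<Rightarrow> 'a)
    \<Rightarrow> 'a option \<Rightarrow> 'x hat \<Rightarrow> 'a option \<Rightarrow> bool" where
  "loop_edge T m X f a l b \<longleftrightarrow> a \<in> adj1 T \<and> b \<in> adj1 T \<and>
     (case l of Pos x \<Rightarrow> x \<in> X \<and> b = mult1 m a (Some (f x))
              | Bar x \<Rightarrow> x \<in> X \<and> a = mult1 m b (Some (f x)))"

inductive loop_path :: "'a set \<Rightarrow> ('a \<Rightarrow> 'a \<Rightarrow> 'a) \<Rightarrow> 'x set \<Rightarrow> ('x \<Rightarrow> 'a)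
    \<Rightarrow> 'a option \<Rightarrow> 'x hat list \<Rightarrow> 'a option \<Rightarrow> bool"
  for T m X f where
  nil: "a \<in> adj1 T \<Longrightarrow> loop_path T m X f a [] a"
| cons: "loop_edge T m X f a l b \<Longrightarrow> loop_path T m X f b w c \<Longrightarrow> loop_path T m X f a (l # w) c"

text \<open>Loop problem L(T) := L(T^1): labels of paths from the identity of T^1 to itself.\<close>
definition loop_problem :: "'a set \<Rightarrow> ('a \<Rightarrow> 'a \<Rightarrow> 'a) \<Rightarrow> 'x set \<Rightarrow> ('x \<Rightarrow> 'a) \<Rightarrow> 'x hat list set" where
  "loop_problem T m X f = {w. loop_path T m X f None w None}"

end

theory Submission
  imports Defs
begin

text \<open>
  In a completely simple semigroup every idempotent is primitive: an idempotent f is conjugate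
  to the given primitive idempotent e (there are a, b with ab = f, ba = e), and conjugation
  g \<mapsto> b g a carries idempotents below f to idempotents below e. Hence for the identity e
  of a maximal subgroup G the local submonoid eSe is a group, so G = eSe by maximality.
  The map s \<mapsto> e s e, fixing the adjoined identity, retracts S^1 onto G^1 and
  commutes with right multiplication by elements of G; it therefore maps every path of the
  loop automaton of S with label in X-hat onto a path of the loop automaton of G with the
  same label and the same (identity) endpoints. The converse inclusion holds because the
  automaton of G is a subautomaton of that of S.
\<close>

lemma loop_path_mono:
  assumes "loop_path T m X f a w c" and "T \<subseteq> T'" "X \<subseteq> Y"
  shows "loop_path T' m Y f a w c"
proof -
  have adj: "adj1 T \<subseteq> adj1 T'" using \<open>T \<subseteq> T'\<close> by (auto simp: adj1_def)
  from assms(1) show ?thesis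
  proof (induction rule: loop_path.induct)
    case (nil a)
    then show ?case using adj by (auto intro: loop_path.nil)
  next
    case (cons a l b w c)
    then have "loop_edge T' m Y f a l b"
      using adj \<open>X \<subseteq> Y\<close> by (auto simp: loop_edge_def split: hat.splits)
    then show ?case using cons.IH by (rule loop_path.cons)
  qed
qed

lemma loop_path_labels: "loop_path T m X f a w c \<Longrightarrow> w \<in> lists (hat_set X)"
  by (induction rule: loop_path.induct) (auto simp: loop_edge_def hat_set_def split: hat.splits)

lemma loop_path_map:
  assumes "loop_path T m Y f a w c" and "w \<in> lists (hat_set X)"
    and adj: "\<And>a. a \<in> adj1 T \<Longrightarrow> \<phi> a \<in> adj1 U"
    and mult: "\<And>a x. a \<in> adj1 T \<Longrightarrow> x \<in> X \<Longrightarrow>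
      \<phi> (mult1 m a (Some (f x))) = mult1 m (\<phi> a) (Some (f x))"
  shows "loop_path U m X f (\<phi> a) w (\<phi> c)"
  using assms(1,2)
proof (induction rule: loop_path.induct)
  case (nil a)
  then show ?case using adj by (simp add: loop_path.nil)
next
  case (cons a l b w c)
  then have "loop_edge U m X f (\<phi> a) l (\<phi> b)"
    using adj mult by (auto simp: loop_edge_def hat_set_def split: hat.splits)
  then show ?case using cons by (auto intro: loop_path.cons)
qed

lemma loop_problem_mono:
  assumes "T \<subseteq> T'" "X \<subseteq> Y"
  shows "loop_problem T m X f \<subseteq> loop_problem T' m Y f \<inter> lists (hat_set X)"
  by (auto simp: loop_problem_def intro: loop_path_mono[OF _ assms] dest: loop_path_labels)

locale semigroup_carrier =
  fixes S :: "'a set" and mult :: "'a \<Rightarrow> 'a \<Rightarrow> 'a" (infixl \<open>\<cdot>\<close> 70)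
  assumes semigroup: "semigroup_on S (\<cdot>)"
begin

lemma closed [simp]: "a \<in> S \<Longrightarrow> b \<in> S \<Longrightarrow> a \<cdot> b \<in> S"
  using semigroup by (simp add: semigroup_on_def)

lemma assoc [simp]: "a \<in> S \<Longrightarrow> b \<in> S \<Longrightarrow> c \<in> S \<Longrightarrow> a \<cdot> b \<cdot> c = a \<cdot> (b \<cdot> c)"
  using semigroup by (simp add: semigroup_on_def)

lemma principal_ideal_is_ideal:
  assumes "a \<in> S"
  shows "is_ideal S (\<cdot>) {x \<cdot> a \<cdot> y | x y. x \<in> S \<and> y \<in> S}"
  unfolding is_ideal_def
proof (intro conjI ballI)
  fix s i assume "s \<in> S" and "i \<in> {x \<cdot> a \<cdot> y | x y. x \<in> S \<and> y \<in> S}"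
  then obtain x y where "x \<in> S" "y \<in> S" "i = x \<cdot> a \<cdot> y" by blast
  moreover have "s \<cdot> (x \<cdot> a \<cdot> y) = (s \<cdot> x) \<cdot> a \<cdot> y" and "x \<cdot> a \<cdot> y \<cdot> s = x \<cdot> a \<cdot> (y \<cdot> s)"
    using \<open>s \<in> S\<close> \<open>x \<in> S\<close> \<open>y \<in> S\<close> assms by simp_all
  ultimately show "s \<cdot> i \<in> {x \<cdot> a \<cdot> y | x y. x \<in> S \<and> y \<in> S}"
    and "i \<cdot> s \<in> {x \<cdot> a \<cdot> y | x y. x \<in> S \<and> y \<in> S}"
    using \<open>s \<in> S\<close> by (blast intro: closed)+
qed (use assms in auto)

text \<open>The simp rule assoc normalises products to right-nested form; the following turn an
  equation x \<cdot> y = w into a rewrite rule that still applies inside such a normal form.\<close>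

lemma prefix_eq:
  assumes "x \<cdot> y = w" and "x \<in> S" "y \<in> S" "z \<in> S"
  shows "x \<cdot> (y \<cdot> z) = w \<cdot> z"
  using assms by (metis assoc)

lemma prefix_eq3:
  assumes "x \<cdot> (y \<cdot> z) = w" and "x \<in> S" "y \<in> S" "z \<in> S" "u \<in> S"
  shows "x \<cdot> (y \<cdot> (z \<cdot> u)) = w \<cdot> u"
  using assms by (metis assoc closed)

end

locale completely_simple_semigroup =
  fixes S :: "'a set" and mult :: "'a \<Rightarrow> 'a \<Rightarrow> 'a" (infixl \<open>\<cdot>\<close> 70)
  assumes completely_simple: "completely_simple S (\<cdot>)"

sublocale completely_simple_semigroup \<subseteq> semigroup_carrier
  using completely_simple by unfold_locales (simp add: completely_simple_def)

context completely_simple_semigroup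
begin

lemma two_sided_divisor:
  assumes "a \<in> S" and "b \<in> S"
  obtains x y where "x \<in> S" "y \<in> S" "b = x \<cdot> a \<cdot> y"
proof -
  have "{x \<cdot> a \<cdot> y | x y. x \<in> S \<and> y \<in> S} = S"
    using completely_simple principal_ideal_is_ideal[OF assms(1)]
    by (simp add: completely_simple_def)
  then show thesis using that assms(2) by blast
qed

lemma primitive_if_conjugate:
  assumes e: "primitive_idempotent S (\<cdot>) e" and "a \<in> S" "b \<in> S"
    and ab: "a \<cdot> b = f" and ba: "b \<cdot> a = e" and ff: "f \<cdot> f = f"
  shows "primitive_idempotent S (\<cdot>) f"
  unfolding primitive_idempotent_def
proof (intro conjI ballI impI)
  show "f \<in> S" "f \<cdot> f = f" using assms by auto
  fix g assume "g \<in> S" and below: "g \<cdot> g = g \<and> f \<cdot> g = g \<and> g \<cdot> f = g"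
  then have gg: "g \<cdot> g = g" and fg: "f \<cdot> g = g" and gf: "g \<cdot> f = g" by auto
  note rules = prefix_eq[OF ab] prefix_eq[OF gg] prefix_eq[OF fg] prefix_eq[OF gf]
  let ?g' = "b \<cdot> g \<cdot> a"
  have "?g' \<cdot> ?g' = ?g'" "e \<cdot> ?g' = ?g'" "?g' \<cdot> e = ?g'"
    unfolding ba[symmetric] using \<open>f \<in> S\<close> \<open>a \<in> S\<close> \<open>b \<in> S\<close> \<open>g \<in> S\<close>
    by (simp_all add: rules)
  then have "?g' = e"
    using e \<open>a \<in> S\<close> \<open>b \<in> S\<close> \<open>g \<in> S\<close> unfolding primitive_idempotent_def by (meson closed)
  have "f = a \<cdot> (b \<cdot> a) \<cdot> b" using \<open>f \<in> S\<close> \<open>a \<in> S\<close> \<open>b \<in> S\<close> by (simp add: rules ab ff)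
  also have "\<dots> = a \<cdot> ?g' \<cdot> b" using \<open>?g' = e\<close> ba by simp
  also have "\<dots> = g"
    using \<open>f \<in> S\<close> \<open>a \<in> S\<close> \<open>b \<in> S\<close> \<open>g \<in> S\<close> by (simp add: ab fg gf rules)
  finally show "g = f" by simp
qed

lemma idempotent_conjugate_to_primitive:
  assumes e: "primitive_idempotent S (\<cdot>) e" and "f \<in> S" and ff: "f \<cdot> f = f"
  obtains a b where "a \<in> S" "b \<in> S" "a \<cdot> b = f" "b \<cdot> a = e"
proof -
  have "e \<in> S" and ee: "e \<cdot> e = e" using e by (auto simp: primitive_idempotent_def)
  obtain c d where "c \<in> S" "d \<in> S" and "f = c \<cdot> e \<cdot> d"
    using two_sided_divisor[OF \<open>e \<in> S\<close> \<open>f \<in> S\<close>] .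
  then have ced: "c \<cdot> (e \<cdot> d) = f" using \<open>e \<in> S\<close> by simp
  note rules = prefix_eq3[OF ced] prefix_eq[OF ee] prefix_eq[OF ff]
  let ?a = "f \<cdot> c \<cdot> e" and ?b = "e \<cdot> d \<cdot> f"
  have "?a \<cdot> ?b = f"
    using \<open>c \<in> S\<close> \<open>d \<in> S\<close> \<open>e \<in> S\<close> \<open>f \<in> S\<close> by (simp add: ced ff rules)
  moreover have "?b \<cdot> ?a = e"
  proof -
    have "?b \<cdot> ?a \<cdot> (?b \<cdot> ?a) = ?b \<cdot> ?a" "e \<cdot> (?b \<cdot> ?a) = ?b \<cdot> ?a" "?b \<cdot> ?a \<cdot> e = ?b \<cdot> ?a"
      using \<open>c \<in> S\<close> \<open>d \<in> S\<close> \<open>e \<in> S\<close> \<open>f \<in> S\<close> by (simp_all add: ee rules)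
    then show ?thesis
      using e \<open>c \<in> S\<close> \<open>d \<in> S\<close> \<open>e \<in> S\<close> \<open>f \<in> S\<close> by (simp add: primitive_idempotent_def)
  qed
  moreover have "?a \<in> S" "?b \<in> S" using \<open>c \<in> S\<close> \<open>d \<in> S\<close> \<open>e \<in> S\<close> \<open>f \<in> S\<close> by simp_all
  ultimately show thesis using that by blast
qed

lemma idempotent_is_primitive:
  assumes "f \<in> S" and "f \<cdot> f = f"
  shows "primitive_idempotent S (\<cdot>) f"
proof -
  obtain e where e: "primitive_idempotent S (\<cdot>) e"
    using completely_simple by (auto simp: completely_simple_def)
  obtain a b where "a \<in> S" "b \<in> S" "a \<cdot> b = f" "b \<cdot> a = e"
    using idempotent_conjugate_to_primitive[OF e assms] .
  then show ?thesis using primitive_if_conjugate[OF e] assms(2) by blast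
qed

lemma idempotent_below_eq:
  assumes "e \<in> S" "e \<cdot> e = e" and "g \<in> S" "g \<cdot> g = g" "e \<cdot> g = g" "g \<cdot> e = g"
  shows "g = e"
  using idempotent_is_primitive[of e] assms by (simp add: primitive_idempotent_def)

definition local_submonoid :: "'a \<Rightarrow> 'a set" where
  "local_submonoid e = {e \<cdot> x \<cdot> e | x. x \<in> S}"

lemma local_submonoid_iff:
  assumes "e \<in> S" "e \<cdot> e = e"
  shows "z \<in> local_submonoid e \<longleftrightarrow> z \<in> S \<and> e \<cdot> z = z \<and> z \<cdot> e = z"
proof
  assume "z \<in> local_submonoid e"
  then obtain x where "x \<in> S" "z = e \<cdot> x \<cdot> e" by (auto simp: local_submonoid_def)
  then show "z \<in> S \<and> e \<cdot> z = z \<and> z \<cdot> e = z"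
    using assms by (simp add: prefix_eq[OF \<open>e \<cdot> e = e\<close>])
next
  assume "z \<in> S \<and> e \<cdot> z = z \<and> z \<cdot> e = z"
  then have "z = e \<cdot> z \<cdot> e" "z \<in> S" by simp_all
  then show "z \<in> local_submonoid e" by (auto simp: local_submonoid_def)
qed

lemma local_submonoid_inverse:
  assumes "e \<in> S" "e \<cdot> e = e" and "z \<in> local_submonoid e"
  obtains w where "w \<in> local_submonoid e" "z \<cdot> w = e" "w \<cdot> z = e"
proof -
  have "z \<in> S" and ez: "e \<cdot> z = z" and ze: "z \<cdot> e = z"
    using assms local_submonoid_iff by auto
  obtain c d where "c \<in> S" "d \<in> S" and "e = c \<cdot> z \<cdot> d"
    using two_sided_divisor[OF \<open>z \<in> S\<close> \<open>e \<in> S\<close>] .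
  then have czd: "c \<cdot> (z \<cdot> d) = e" using \<open>z \<in> S\<close> by simp
  let ?u = "e \<cdot> c \<cdot> e" and ?v = "e \<cdot> d \<cdot> e"
  have "?u \<in> S" "?v \<in> S" and ue: "?u \<cdot> e = ?u" and ev: "e \<cdot> ?v = ?v" and ve: "?v \<cdot> e = ?v"
    using \<open>c \<in> S\<close> \<open>d \<in> S\<close> \<open>e \<in> S\<close>
    by (simp_all add: prefix_eq[OF \<open>e \<cdot> e = e\<close>] \<open>e \<cdot> e = e\<close>)
  have uzv: "?u \<cdot> (z \<cdot> ?v) = e"
    using \<open>c \<in> S\<close> \<open>d \<in> S\<close> \<open>e \<in> S\<close> \<open>z \<in> S\<close>
    by (simp add: prefix_eq[OF \<open>e \<cdot> e = e\<close>] prefix_eq[OF ez] prefix_eq[OF ze] prefix_eq3[OF czd]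
        \<open>e \<cdot> e = e\<close>)
  note rules = prefix_eq3[OF uzv] prefix_eq[OF ue] prefix_eq[OF ev] prefix_eq[OF ve]
    prefix_eq[OF ez] prefix_eq[OF ze]
  let ?w = "?v \<cdot> ?u"
  have "?w \<in> local_submonoid e"
    using \<open>?u \<in> S\<close> \<open>?v \<in> S\<close> assms by (simp add: local_submonoid_iff rules ev ue)
  moreover have "z \<cdot> ?w = e"
    by (rule idempotent_below_eq)
      (use \<open>?u \<in> S\<close> \<open>?v \<in> S\<close> \<open>z \<in> S\<close> assms in \<open>simp_all add: rules ue ez\<close>)
  moreover have "?w \<cdot> z = e"
    by (rule idempotent_below_eq)
      (use \<open>?u \<in> S\<close> \<open>?v \<in> S\<close> \<open>z \<in> S\<close> assms in \<open>simp_all add: rules ev ze\<close>)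
  ultimately show thesis using that by blast
qed

lemma local_submonoid_subgroup:
  assumes "e \<in> S" "e \<cdot> e = e"
  shows "subgroup_in S (\<cdot>) (local_submonoid e)"
  unfolding subgroup_in_def
proof (intro conjI bexI[of _ e])
  show "local_submonoid e \<subseteq> S" and "e \<in> local_submonoid e"
    and "\<forall>a\<in>local_submonoid e. e \<cdot> a = a \<and> a \<cdot> e = a"
    using assms by (auto simp: local_submonoid_iff)
  show "\<forall>a\<in>local_submonoid e. \<forall>b\<in>local_submonoid e. a \<cdot> b \<in> local_submonoid e"
    using assms by (auto simp: local_submonoid_iff prefix_eq)
  show "\<forall>a\<in>local_submonoid e. \<exists>b\<in>local_submonoid e. a \<cdot> b = e \<and> b \<cdot> a = e"
    using local_submonoid_inverse[OF assms] by metis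
qed

lemma maximal_subgroup_eq_local_submonoid:
  assumes "maximal_subgroup S (\<cdot>) G"
  obtains e where "e \<in> G" "\<forall>g\<in>G. e \<cdot> g = g \<and> g \<cdot> e = g" "G = local_submonoid e"
proof -
  obtain e where "e \<in> G" and e: "\<forall>g\<in>G. e \<cdot> g = g \<and> g \<cdot> e = g" and "G \<subseteq> S"
    using assms by (auto simp: maximal_subgroup_def subgroup_in_def)
  then have "e \<in> S" "e \<cdot> e = e" by auto
  moreover from this have "G \<subseteq> local_submonoid e"
    using e \<open>G \<subseteq> S\<close> by (auto simp: local_submonoid_iff)
  ultimately have "local_submonoid e = G"
    using assms local_submonoid_subgroup by (simp add: maximal_subgroup_def)
  then show thesis using that \<open>e \<in> G\<close> e by blast
qed

definition retraction :: "'a \<Rightarrow> 'a option \<Rightarrow> 'a option" where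
  "retraction e = map_option (\<lambda>s. e \<cdot> s \<cdot> e)"

lemma retraction_in_adj1: "a \<in> adj1 S \<Longrightarrow> retraction e a \<in> adj1 (local_submonoid e)"
  by (auto simp: retraction_def adj1_def local_submonoid_def)

lemma retraction_mult1:
  assumes "e \<in> S" "e \<cdot> e = e" and "a \<in> adj1 S" "g \<in> local_submonoid e"
  shows "retraction e (mult1 (\<cdot>) a (Some g)) = mult1 (\<cdot>) (retraction e a) (Some g)"
proof -
  have "g \<in> S" and eg: "e \<cdot> g = g" and ge: "g \<cdot> e = g"
    using assms local_submonoid_iff by auto
  then show ?thesis
    using assms by (cases a) (auto simp: retraction_def adj1_def prefix_eq[OF eg] prefix_eq[OF ge])
qed


lemma loop_problem_retract:
  assumes "e \<in> S" "e \<cdot> e = e" and "f ` X \<subseteq> local_submonoid e"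
  shows "loop_problem S (\<cdot>) Y f \<inter> lists (hat_set X) \<subseteq> loop_problem (local_submonoid e) (\<cdot>) X f"
proof
  fix w assume "w \<in> loop_problem S (\<cdot>) Y f \<inter> lists (hat_set X)"
  then have "loop_path S (\<cdot>) Y f None w None" and "w \<in> lists (hat_set X)"
    by (auto simp: loop_problem_def)
  then have "loop_path (local_submonoid e) (\<cdot>) X f (retraction e None) w (retraction e None)"
  proof (rule loop_path_map)
    show "retraction e a \<in> adj1 (local_submonoid e)" if "a \<in> adj1 S" for a
      using that by (rule retraction_in_adj1)
    show "retraction e (mult1 (\<cdot>) a (Some (f x))) = mult1 (\<cdot>) (retraction e a) (Some (f x))"
      if "a \<in> adj1 S" "x \<in> X" for a x
      using retraction_mult1[OF assms(1,2) that(1)] that(2) assms(3) by blast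
  qed
  then show "w \<in> loop_problem (local_submonoid e) (\<cdot>) X f"
    by (simp add: loop_problem_def retraction_def)
qed

end

theorem theorem5p4:
  fixes S G :: "'a set" and m :: "'a \<Rightarrow> 'a \<Rightarrow> 'a"
    and X Y :: "'x set" and f :: "'x \<Rightarrow> 'a"
  assumes "completely_simple S m"
    and "maximal_subgroup S m G"
    and "X \<subseteq> Y"
    and "semigroup_generators G m X f"
    and "semigroup_generators S m Y f"
  shows "loop_problem G m X f = loop_problem S m Y f \<inter> lists (hat_set X)"
proof -
  interpret completely_simple_semigroup S m by unfold_locales (fact assms(1))
  obtain e where "e \<in> G" and e: "\<forall>g\<in>G. m e g = g \<and> m g e = g" and G: "G = local_submonoid e"
    using maximal_subgroup_eq_local_submonoid[OF assms(2)] .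
  have "G \<subseteq> S" using assms(2) by (simp add: maximal_subgroup_def subgroup_in_def)
  with \<open>e \<in> G\<close> e have "e \<in> S" "m e e = e" by auto
  have "f ` X \<subseteq> G" using assms(4) by (auto simp: semigroup_generators_def)
  show ?thesis
  proof
    show "loop_problem G m X f \<subseteq> loop_problem S m Y f \<inter> lists (hat_set X)"
      using loop_problem_mono[OF \<open>G \<subseteq> S\<close> assms(3)] .
    show "loop_problem S m Y f \<inter> lists (hat_set X) \<subseteq> loop_problem G m X f"
      using loop_problem_retract[OF \<open>e \<in> S\<close> \<open>m e e = e\<close>] \<open>f ` X \<subseteq> G\<close> by (simp add: G)
  qed
qed

end
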